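(* Let $\Theta$ be a saturated branch of a tableau of $\mathbf{TAB}_{\mathbf{IB}}$. If $@_i j\in\Theta$ (with $j$ a nominal) and $i,j\in\mathrm{dom}(v_\Theta)$, then $v_\Theta(i)=v_\Theta(j)$.
   Context: Hybrid language: fix disjoint countably infinite sets $\mathbf{Prop}$ (propositional variables) and $\mathbf{Nom}$ (nominals). Formulas: $\varphi ::= p \mid i \mid \neg\varphi \mid \varphi\land\varphi \mid \Diamond\varphi \mid @_i\varphi$ with $p\in\mathbf{Prop}$, $i\in\mathbf{Nom}$; $\Box\varphi$ abbreviates $\neg\Diamond\neg\varphi$. Tableau calculus $\mathbf{TAB}_{\mathbf{IB}}$. A tableau is a well-founded tree whose nodes are formulas of the form $@_i\varphi$; its root is a formula $@_i\varphi$ (the root formula) where $i$ does not occur in $\varphi$. A branch is a maximal path; $\varphi\in\Theta$ means $\varphi$ occurs on branch $\Theta$. Each branch is extended by applying the rules below to its formulas as often as possible, except that no further formula is added to a branch once either (i) every new formula generated by applying any rule already occurs on the branch, or (ii) the branch is closed, i.e. contains $@_i\varphi$ and $@_i\neg\varphi$ for some formula $\varphi$ and nominal $i$. A branch is saturated if every new formula generated by applying some rule already occurs on it. An accessibility formula is a formula $@_i\Diamond j$ added by rule $[\Diamond]$ (with $j$ the new nominal). Rules (premises already on the branch; conclusions added to it): [$\neg\neg$] from $@_i\neg\neg\varphi$ add $@_i\varphi$; [$\land$] from $@_i(\varphi\land\psi)$ add $@_i\varphi$ and $@_i\psi$; [$\neg\land$] from $@_i\neg(\varphi\land\psi)$ split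 the branch into one extended by $@_i\neg\varphi$ and one extended by $@_i\neg\psi$; [$\Diamond$] from $@_i\Diamond\varphi$, which is not an accessibility formula, add $@_i\Diamond j$ and $@_j\varphi$ where $j$ is a nominal not occurring on the branch; this rule is applied at most once per formula, and only if $i$ is a quasi-urfather on the branch (defined below); [$\neg\Diamond$] from $@_i\neg\Diamond\varphi$ and $@_i\Diamond j$ add $@_j\neg\varphi$; [$\Box_{sym}$] from $@_i\Box\varphi$ and $@_j\Diamond i$ add $@_j\varphi$; [$@$] from $@_i@_j\varphi$ add $@_j\varphi$; [$\neg@$] from $@_i\neg@_j\varphi$ add $@_j\neg\varphi$; [$Id$] from $@_i\varphi$, which is not an accessibility formula, and $@_i j$ add $@_j\varphi$; [$Ref$] for any nominal $i$ occurring on the branch add $@_i i$; ($\mathcal{I}$) for any nominal $i$ occurring on the branch add $@_i\neg\Diamond i$. Auxiliary notions for a branch $\Theta$. $@_i\varphi$ is a quasi-subformula of $@_j\psi$ if $\varphi$ is a subformula of $\psi$, or $\varphi=\neg\chi$ with $\chi$ a subformula of $\psi$. For a nominal $i$ occurring in $\Theta$, $T^\Theta(i)=\{\varphi \mid @_i\varphi\in\Theta$ and $@_i\varphi$ is a quasi-subformula of the root formula$\}$. Nominals $i,j$ are twins if $T^\Theta(i)=T^\Theta(j)$. $i\prec_\Theta j$ if $j$ was introduced by applying $[\Diamond]$ to a formula $@_i\Diamond\varphi$; $\prec_\Theta^*$ is its reflexive transitive closure. A nominal $i$ is a quasi-urfather on $\Theta$ if there are no twins $j\neq k$ with $j\prec_\Theta^*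 i$ and $k\prec_\Theta^* i$. The identity urfather $v_\Theta(i)$ of a nominal $i$ occurring in $\Theta$ is the earliest introduced nominal $j$ on $\Theta$ such that $j$ is a twin of $i$ and $j$ is a quasi-urfather; it may fail to exist, and $\mathrm{dom}(v_\Theta)$ denotes the set of nominals $i$ for which it exists. *)

theory Defs
  imports Main
begin

datatype form =
    Pro nat
  | Nom nat
  | Neg form
  | Con form form
  | Dia form
  | At nat form

abbreviation Box :: "form \<Rightarrow> form" where
  "Box \<phi> \<equiv> Neg (Dia (Neg \<phi>))"

fun subf :: "form \<Rightarrow> form set" where
  "subf (Pro p) = {Pro p}"
| "subf (Nom i) = {Nom i}"
| "subf (Neg \<phi>) = insert (Neg \<phi>) (subf \<phi>)"
| "subf (Con \<phi> \<psi>) = insert (Con \<phi> \<psi>) (subf \<phi> \<union> subf \<psi>)"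
| "subf (Dia \<phi>) = insert (Dia \<phi>) (subf \<phi>)"
| "subf (At i \<phi>) = insert (At i \<phi>) (subf \<phi>)"

fun noms_f :: "form \<Rightarrow> nat set" where
  "noms_f (Pro p) = {}"
| "noms_f (Nom i) = {i}"
| "noms_f (Neg \<phi>) = noms_f \<phi>"
| "noms_f (Con \<phi> \<psi>) = noms_f \<phi> \<union> noms_f \<psi>"
| "noms_f (Dia \<phi>) = noms_f \<phi>"
| "noms_f (At i \<phi>) = insert i (noms_f \<phi>)"

(* A node of a branch is the formula @_i \<phi>, stored as (i, \<phi>, origin).
   origin = Some \<chi> iff this node is the accessibility formula @_i \<diamond> j added by
   rule [\<diamond>] applied to @_i \<diamond> \<chi>; otherwise origin = None. *)
type_synonym node = "nat \<times> form \<times> form option"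

type_synonym branch = "node list"

definition on :: "nat \<Rightarrow> form \<Rightarrow> branch \<Rightarrow> bool" where
  "on i \<phi> \<Theta> \<longleftrightarrow> (\<exists>a. (i, \<phi>, a) \<in> set \<Theta>)"

definition noms_node :: "node \<Rightarrow> nat set" where
  "noms_node n = insert (fst n) (noms_f (fst (snd n)))"

definition noms :: "branch \<Rightarrow> nat set" where
  "noms \<Theta> = (\<Union>n\<in>set \<Theta>. noms_node n)"

definition root_body :: "branch \<Rightarrow> form" where
  "root_body \<Theta> = fst (snd (hd \<Theta>))"

(* @_i \<phi> is a quasi-subformula of @_j \<psi> *)
definition qsub :: "form \<Rightarrow> form \<Rightarrow> bool" where
  "qsub \<phi> \<psi> \<longleftrightarrow> \<phi> \<in> subf \<psi> \<or> (\<exists>\<chi>. \<phi> = Neg \<chi> \<and> \<chi> \<in> subf \<psi>)"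

definition T :: "branch \<Rightarrow> nat \<Rightarrow> form set" where
  "T \<Theta> i = {\<phi>. on i \<phi> \<Theta> \<and> qsub \<phi> (root_body \<Theta>)}"

definition twins :: "branch \<Rightarrow> nat \<Rightarrow> nat \<Rightarrow> bool" where
  "twins \<Theta> i j \<longleftrightarrow> T \<Theta> i = T \<Theta> j"

definition prec :: "branch \<Rightarrow> nat \<Rightarrow> nat \<Rightarrow> bool" where
  "prec \<Theta> i j \<longleftrightarrow> (\<exists>\<chi>. (i, Dia (Nom j), Some \<chi>) \<in> set \<Theta>)"

definition quasi_urfather :: "branch \<Rightarrow> nat \<Rightarrow> bool" where
  "quasi_urfather \<Theta> i \<longleftrightarrow>
     \<not> (\<exists>j k. j \<noteq> k \<and> twins \<Theta> j k \<and> (prec \<Theta>)\<^sup>*\<^sup>* j i \<and> (prec \<Theta>)\<^sup>*\<^sup>* k i)"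

(* The rules: ext \<Theta> e means that applying a rule to \<Theta> yields the list e of
   formulas to be added to the (current) branch \<Theta>. *)
inductive ext :: "branch \<Rightarrow> node list \<Rightarrow> bool" for \<Theta> :: branch where
  negneg: "on i (Neg (Neg \<phi>)) \<Theta> \<Longrightarrow> ext \<Theta> [(i, \<phi>, None)]"
| conj: "on i (Con \<phi> \<psi>) \<Theta> \<Longrightarrow> ext \<Theta> [(i, \<phi>, None), (i, \<psi>, None)]"
| negconj1: "on i (Neg (Con \<phi> \<psi>)) \<Theta> \<Longrightarrow> ext \<Theta> [(i, Neg \<phi>, None)]"
| negconj2: "on i (Neg (Con \<phi> \<psi>)) \<Theta> \<Longrightarrow> ext \<Theta> [(i, Neg \<psi>, None)]"
| dia: "(i, Dia \<phi>, None) \<in> set \<Theta> \<Longrightarrow> j \<notin> noms \<Theta> \<Longrightarrow> quasi_urfather \<Theta> i \<Longrightarrow>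
        \<not> (\<exists>k. (i, Dia (Nom k), Some \<phi>) \<in> set \<Theta>) \<Longrightarrow>
        ext \<Theta> [(i, Dia (Nom j), Some \<phi>), (j, \<phi>, None)]"
| negdia: "on i (Neg (Dia \<phi>)) \<Theta> \<Longrightarrow> on i (Dia (Nom j)) \<Theta> \<Longrightarrow> ext \<Theta> [(j, Neg \<phi>, None)]"
| boxsym: "on i (Box \<phi>) \<Theta> \<Longrightarrow> on j (Dia (Nom i)) \<Theta> \<Longrightarrow> ext \<Theta> [(j, \<phi>, None)]"
| at: "on i (At j \<phi>) \<Theta> \<Longrightarrow> ext \<Theta> [(j, \<phi>, None)]"
| negat: "on i (Neg (At j \<phi>)) \<Theta> \<Longrightarrow> ext \<Theta> [(j, Neg \<phi>, None)]"
| ident: "(i, \<phi>, None) \<in> set \<Theta> \<Longrightarrow> on i (Nom j) \<Theta> \<Longrightarrow> ext \<Theta> [(j, \<phi>, None)]"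
| refl: "i \<in> noms \<Theta> \<Longrightarrow> ext \<Theta> [(i, Nom i, None)]"
| irr: "i \<in> noms \<Theta> \<Longrightarrow> ext \<Theta> [(i, Neg (Dia (Nom i)), None)]"

definition closed :: "branch \<Rightarrow> bool" where
  "closed \<Theta> \<longleftrightarrow> (\<exists>i \<phi>. on i \<phi> \<Theta> \<and> on i (Neg \<phi>) \<Theta>)"

definition saturated :: "branch \<Rightarrow> bool" where
  "saturated \<Theta> \<longleftrightarrow> (\<forall>e. ext \<Theta> e \<longrightarrow> (\<forall>(i, \<phi>, a) \<in> set e. on i \<phi> \<Theta>))"

(* Finite initial segments of branches of TAB_IB tableaux, starting from the root. *)
inductive tab_path :: "branch \<Rightarrow> bool" where
  root: "i \<notin> noms_f \<phi> \<Longrightarrow> tab_path [(i, \<phi>, None)]"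
| step: "tab_path \<Theta> \<Longrightarrow> \<not> closed \<Theta> \<Longrightarrow> \<not> saturated \<Theta> \<Longrightarrow> ext \<Theta> e \<Longrightarrow> tab_path (\<Theta> @ e)"

definition intro_pos :: "branch \<Rightarrow> nat \<Rightarrow> nat" where
  "intro_pos \<Theta> i = (LEAST n. n < length \<Theta> \<and> i \<in> noms_node (\<Theta> ! n))"

(* "j is introduced no later than k"; ties (only possible between nominals of the
   root formula) are broken by the index of the nominal *)
definition intro_le :: "branch \<Rightarrow> nat \<Rightarrow> nat \<Rightarrow> bool" where
  "intro_le \<Theta> j k \<longleftrightarrow> intro_pos \<Theta> j < intro_pos \<Theta> k \<or>
                        (intro_pos \<Theta> j = intro_pos \<Theta> k \<and> j \<le> k)"

definition is_urfather :: "branch \<Rightarrow> nat \<Rightarrow> nat \<Rightarrow> bool" where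
  "is_urfather \<Theta> i j \<longleftrightarrow>
     j \<in> noms \<Theta> \<and> twins \<Theta> j i \<and> quasi_urfather \<Theta> j \<and>
     (\<forall>k. k \<in> noms \<Theta> \<and> twins \<Theta> k i \<and> quasi_urfather \<Theta> k \<longrightarrow> intro_le \<Theta> j k)"

definition v :: "branch \<Rightarrow> nat \<Rightarrow> nat option" where
  "v \<Theta> i = (if i \<in> noms \<Theta> \<and> (\<exists>j. is_urfather \<Theta> i j)
             then Some (THE j. is_urfather \<Theta> i j) else None)"

end

theory Submission
  imports Defs
begin

(* Rule [Id] copies every formula at i that is not an accessibility formula to j,
   and accessibility formulas @_i <>k never count for T, because k is a fresh nominal that does
   not occur in the root formula. Hence T(i) \<subseteq> T(j); with [Ref] and [Id] the equation i = j
   is symmetric, so i and j are twins. The identity urfather depends only on the twin class. *)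

lemma noms_f_subf: "\<phi> \<in> subf \<psi> \<Longrightarrow> noms_f \<phi> \<subseteq> noms_f \<psi>"
  by (induction \<psi>) auto

lemma on_noms:
  assumes "on i \<phi> \<Theta>"
  shows "i \<in> noms \<Theta>" and "noms_f \<phi> \<subseteq> noms \<Theta>"
  using assms by (force simp: on_def noms_def noms_node_def)+

lemma tab_path_not_Nil: "tab_path \<Theta> \<Longrightarrow> \<Theta> \<noteq> []"
  by (induction rule: tab_path.induct) auto

lemma noms_f_root_body_subset:
  "\<Theta> \<noteq> [] \<Longrightarrow> noms_f (root_body \<Theta>) \<subseteq> noms \<Theta>"
  by (cases \<Theta>) (auto simp: root_body_def noms_def noms_node_def)

lemma accessibility_formula_fresh:
  assumes "tab_path \<Theta>" and "(x, \<psi>, Some \<chi>) \<in> set \<Theta>"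
  shows "\<exists>k. \<psi> = Dia (Nom k) \<and> k \<notin> noms_f (root_body \<Theta>)"
  using assms
proof (induction arbitrary: x \<psi> \<chi> rule: tab_path.induct)
  case (root i \<phi>)
  then show ?case by simp
next
  case (step \<Theta> e)
  have root_body_eq: "root_body (\<Theta> @ e) = root_body \<Theta>"
    using tab_path_not_Nil[OF step.hyps(1)] by (simp add: root_body_def)
  have fresh_in_e: "\<exists>k. \<psi> = Dia (Nom k) \<and> k \<notin> noms_f (root_body \<Theta>)"
    if "(x, \<psi>, Some \<chi>) \<in> set e"
    using step.hyps(4) that noms_f_root_body_subset[OF tab_path_not_Nil[OF step.hyps(1)]]
    by cases auto
  from step.prems consider "(x, \<psi>, Some \<chi>) \<in> set \<Theta>" | "(x, \<psi>, Some \<chi>) \<in> set e"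
    by auto
  then show ?case
  proof cases
    case 1
    then show ?thesis using step.IH by (simp add: root_body_eq)
  next
    case 2
    then show ?thesis using fresh_in_e by (simp add: root_body_eq)
  qed
qed

lemma accessibility_formula_not_qsub_root:
  assumes "tab_path \<Theta>" and "(x, \<psi>, Some \<chi>) \<in> set \<Theta>"
  shows "\<not> qsub \<psi> (root_body \<Theta>)"
proof
  assume "qsub \<psi> (root_body \<Theta>)"
  obtain k where k: "\<psi> = Dia (Nom k)" "k \<notin> noms_f (root_body \<Theta>)"
    using accessibility_formula_fresh[OF assms] by blast
  with \<open>qsub \<psi> (root_body \<Theta>)\<close> have "\<psi> \<in> subf (root_body \<Theta>)"
    by (auto simp: qsub_def)
  with k show False
    using noms_f_subf by fastforce
qed

lemma saturated_on:
  "saturated \<Theta> \<Longrightarrow> ext \<Theta> [(j, \<phi>, None)] \<Longrightarrow> on j \<phi> \<Theta>"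
  unfolding saturated_def by auto

lemma T_subset_if_on_Nom:
  assumes "tab_path \<Theta>" and "saturated \<Theta>" and "on i (Nom j) \<Theta>"
  shows "T \<Theta> i \<subseteq> T \<Theta> j"
proof
  fix \<phi> assume "\<phi> \<in> T \<Theta> i"
  then have qsub: "qsub \<phi> (root_body \<Theta>)" and "on i \<phi> \<Theta>"
    by (auto simp: T_def)
  then obtain a where a: "(i, \<phi>, a) \<in> set \<Theta>"
    by (auto simp: on_def)
  with qsub have "a = None"
    using accessibility_formula_not_qsub_root[OF assms(1)] by (cases a) auto
  with a have "(i, \<phi>, None) \<in> set \<Theta>"
    by simp
  then have "ext \<Theta> [(j, \<phi>, None)]"
    using assms(3) by (rule ext.ident)
  then show "\<phi> \<in> T \<Theta> j"
    using saturated_on[OF assms(2)] qsub by (simp add: T_def)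
qed

lemma on_Nom_sym:
  assumes "tab_path \<Theta>" and "saturated \<Theta>" and "on i (Nom j) \<Theta>"
  shows "on j (Nom i) \<Theta>"
proof -
  have "on i (Nom i) \<Theta>"
    using saturated_on[OF assms(2) ext.refl[OF on_noms(1)[OF assms(3)]]] .
  then obtain a where a: "(i, Nom i, a) \<in> set \<Theta>"
    by (auto simp: on_def)
  then have "a = None"
    using accessibility_formula_fresh[OF assms(1)] by (cases a) auto
  with a have "(i, Nom i, None) \<in> set \<Theta>"
    by simp
  then show ?thesis
    using saturated_on[OF assms(2) ext.ident[OF _ assms(3)]] by blast
qed

lemma twins_if_on_Nom:
  assumes "tab_path \<Theta>" and "saturated \<Theta>" and "on i (Nom j) \<Theta>"
  shows "twins \<Theta> i j"
  using T_subset_if_on_Nom[OF assms] T_subset_if_on_Nom[OF assms(1,2) on_Nom_sym[OF assms]]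
  by (simp add: twins_def)

lemma v_eq_if_twins:
  assumes "twins \<Theta> i j" and "i \<in> noms \<Theta>" and "j \<in> noms \<Theta>"
  shows "v \<Theta> i = v \<Theta> j"
proof -
  have "is_urfather \<Theta> i = is_urfather \<Theta> j"
    using assms(1) by (simp add: fun_eq_iff is_urfather_def twins_def)
  with assms(2,3) show ?thesis
    by (simp add: v_def)
qed

theorem lemma8:
  assumes "tab_path \<Theta>"
    and "saturated \<Theta>"
    and "on i (Nom j) \<Theta>"
    and "i \<in> dom (v \<Theta>)"
    and "j \<in> dom (v \<Theta>)"
  shows "v \<Theta> i = v \<Theta> j"
proof (rule v_eq_if_twins)
  show "twins \<Theta> i j"
    using assms(1-3) by (rule twins_if_on_Nom)
  show "i \<in> noms \<Theta>" and "j \<in> noms \<Theta>"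
    using on_noms[OF assms(3)] by simp_all
qed

end
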